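(* Let $L$ be a Jordan subalgebra of $\mathrm{Sym}(p)$ and consider the Gaussian linear concentration model on $L$ with data $x^1,\dots,x^n$ and $W=n^{-1}\sum_ix^i(x^i)^\top$. Then $I_p\in L$, and if $\Pi_L(W)$ is invertible, the matrix $\{\Pi_L(W)\}^{-1}$ lies in $L$, it is the unique invertible solution $K\in L$ of the likelihood equation $\Pi_L(W)=\Pi_L(K^{-1})$ (so the MLE is $\hat K=\{\Pi_L(W)\}^{-1}$), and it solves the score matching equation $\Pi_L(K\circ W)=I_p$; in particular, when the score matching estimator $\check K$ exists it satisfies $\check K=\hat K=\{\Pi_L(W)\}^{-1}$.
   Context: $\mathrm{Sym}(p)$: real symmetric $p\times p$ matrices with trace inner product; $\mathrm{Sym}_+(p)$: positive definite ones; a Jordan subalgebra is a linear subspace $L$ closed under the Jordan product $A\circ B=(AB^\top+BA^\top)/2$ (equivalently $L\cap\mathrm{Sym}_+(p)$ is closed under inversion) and containing $L\cap\mathrm{Sym}_+(p)\neq\emptyset$; $\Pi_L$ is orthogonal projection onto $L$. The Gaussian linear concentration model is $\{N_p(0,K^{-1}):K\in L\cap\mathrm{Sym}_+(p)\}$; its log-likelihood is proportional to $\log\det K-\operatorname{tr}(KW)$. The score matching estimator (SME) $\check K$ is said to exist if the linear equation $\Pi_L(K\circ W)=I_p$ has a unique solution $K\in L$, which is then $\check K$ (no positive definiteness required). *)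

theory Defs
  imports "HOL-Analysis.Analysis"
begin

type_synonym 'p mat = "real^'p^'p"

definition Sym :: "('p::finite) mat set" where
  "Sym = {A. transpose A = A}"

definition pos_def :: "('p::finite) mat \<Rightarrow> bool" where
  "pos_def A \<longleftrightarrow> transpose A = A \<and> (\<forall>x. x \<noteq> 0 \<longrightarrow> x \<bullet> (A *v x) > 0)"

definition Sym_plus :: "('p::finite) mat set" where
  "Sym_plus = {A. pos_def A}"

definition tr_inner :: "('p::finite) mat \<Rightarrow> 'p mat \<Rightarrow> real" where
  "tr_inner A B = trace (transpose A ** B)"

definition jprod :: "('p::finite) mat \<Rightarrow> 'p mat \<Rightarrow> 'p mat" where
  "jprod A B = (1/2) *\<^sub>R (A ** transpose B + B ** transpose A)"

definition jordan_subalgebra :: "('p::finite) mat set \<Rightarrow> bool" where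
  "jordan_subalgebra L \<longleftrightarrow> subspace L \<and> L \<subseteq> Sym
     \<and> (\<forall>A\<in>L. \<forall>B\<in>L. jprod A B \<in> L) \<and> L \<inter> Sym_plus \<noteq> {}"

definition proj :: "('p::finite) mat set \<Rightarrow> 'p mat \<Rightarrow> 'p mat" where
  "proj L X = (THE Y. Y \<in> L \<and> (\<forall>Z\<in>L. tr_inner (X - Y) Z = 0))"

definition sample_cov :: "nat \<Rightarrow> (nat \<Rightarrow> real^'p) \<Rightarrow> ('p::finite) mat" where
  "sample_cov n x = (1 / real n) *\<^sub>R (\<Sum>i<n. (\<chi> a b. x i $ a * x i $ b))"

definition sme_exists :: "('p::finite) mat set \<Rightarrow> 'p mat \<Rightarrow> bool" where
  "sme_exists L W \<longleftrightarrow> (\<exists>!K. K \<in> L \<and> proj L (jprod K W) = mat 1)"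

definition sme :: "('p::finite) mat set \<Rightarrow> 'p mat \<Rightarrow> 'p mat" where
  "sme L W = (THE K. K \<in> L \<and> proj L (jprod K W) = mat 1)"

end

theory Submission
  imports Defs
begin

text \<open>
  A Jordan subalgebra \<open>L\<close> contains \<open>I\<^sub>p\<close> and is closed under inversion: for invertible
  \<open>A \<in> L\<close>, left multiplication by \<open>A\<close> maps the finite-dimensional space of elements of \<open>L\<close>
  commuting with \<open>A\<close> injectively, hence bijectively, onto itself (on commuting symmetric
  matrices \<open>A \<circ> X = A X\<close>). So \<open>M = \<Pi>\<^sub>L(W)\<inverse>\<close> lies in \<open>L\<close>, and an invertible \<open>K \<in> L\<close> with
  \<open>\<Pi>\<^sub>L(W) = \<Pi>\<^sub>L(K\<inverse>) = K\<inverse>\<close> must be \<open>M\<close>. Since Jordan multiplication by \<open>M\<close> is self-adjoint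
  for the trace inner product and preserves \<open>L\<close>, for \<open>Z \<in> L\<close>
  \<open>\<langle>M \<circ> W, Z\<rangle> = \<langle>W, M \<circ> Z\<rangle> = \<langle>\<Pi>\<^sub>L W, M \<circ> Z\<rangle> = \<langle>M \<circ> \<Pi>\<^sub>L W, Z\<rangle> = \<langle>I\<^sub>p, Z\<rangle>\<close>,
  i.e. \<open>M\<close> solves the score matching equation.
\<close>

lemma matrix_inv_right: "invertible A \<Longrightarrow> A ** matrix_inv A = mat 1"
  and matrix_inv_left: "invertible A \<Longrightarrow> matrix_inv A ** A = mat 1"
  unfolding invertible_def matrix_inv_def by (metis (mono_tags, lifting) someI_ex)+

lemma matrix_mul_left_cancel:
  assumes "invertible A" "A ** X = A ** Y"
  shows "X = Y"
  by (metis assms matrix_inv_left matrix_mul_assoc matrix_mul_lid)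

lemma matrix_inv_unique: "invertible A \<Longrightarrow> A ** X = mat 1 \<Longrightarrow> matrix_inv A = X"
  by (metis matrix_inv_right matrix_mul_left_cancel)

lemma invertible_matrix_inv: "invertible A \<Longrightarrow> invertible (matrix_inv A)"
  using matrix_inv_left matrix_inv_right invertible_def by blast

lemma matrix_inv_matrix_inv: "invertible A \<Longrightarrow> matrix_inv (matrix_inv A) = A"
  by (simp add: invertible_matrix_inv matrix_inv_left matrix_inv_unique)

lemma pos_def_invertible:
  fixes A :: "real^'n^'n"
  assumes "pos_def A"
  shows "invertible A"
proof -
  have "x = 0" if "A *v x = 0" for x
    using assms that unfolding pos_def_def by (metis inner_zero_right less_irrefl)
  then show ?thesis
    using matrix_left_invertible_ker invertible_left_inverse by blast
qed

lemma matrix_add_rdistrib: "((A::'a::semiring_1^'n^'m) + B) ** C = A ** C + B ** C"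
  by (simp add: matrix_matrix_mult_def vec_eq_iff distrib_right sum.distrib)

lemma subspace_commutant: "subspace {X :: real^'n^'n. A ** X = X ** A}"
  unfolding subspace_def
  by (simp add: matrix_add_ldistrib matrix_add_rdistrib matrix_scalar_ac
      scalar_matrix_assoc[symmetric])

lemma inner_matrix_eq_trace: "(X::real^'n^'m) \<bullet> Y = trace (transpose X ** Y)"
  unfolding trace_def inner_vec_def matrix_matrix_mult_def transpose_def
  by simp (rule sum.swap)

lemma tr_inner_eq_inner: "tr_inner A B = A \<bullet> B"
  by (simp add: tr_inner_def inner_matrix_eq_trace)

lemma inner_matrix_mul_left: "((A::real^'n^'n) ** B) \<bullet> C = B \<bullet> (transpose A ** C)"
  by (simp add: inner_matrix_eq_trace matrix_transpose_mul matrix_mul_assoc)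

lemma inner_matrix_mul_right: "((A::real^'n^'n) ** B) \<bullet> C = A \<bullet> (C ** transpose B)"
  by (metis inner_matrix_eq_trace matrix_transpose_mul matrix_mul_assoc trace_mul_sym)

lemma orthogonal_projection_unique:
  assumes "subspace L" "Y \<in> L" "Y' \<in> L"
    and "\<forall>Z\<in>L. (X - Y) \<bullet> Z = 0" "\<forall>Z\<in>L. (X - Y') \<bullet> Z = 0"
  shows "Y = Y'"
proof -
  have "Y' - Y \<in> L"
    using assms subspace_diff by blast
  then have "(X - Y) \<bullet> (Y' - Y) - (X - Y') \<bullet> (Y' - Y) = 0"
    using assms by simp
  then have "(Y' - Y) \<bullet> (Y' - Y) = 0"
    by (simp add: inner_diff_left)
  then show ?thesis by simp
qed

lemma proj_characterization:
  assumes "subspace L"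
  shows "proj L X \<in> L" "\<forall>Z\<in>L. (X - proj L X) \<bullet> Z = 0"
proof -
  obtain Y Y' where Y: "Y \<in> span L" "\<And>w. w \<in> span L \<Longrightarrow> orthogonal Y' w" "X = Y + Y'"
    using orthogonal_subspace_decomp_exists[of L X] by blast
  have span_L: "span L = L"
    using assms by (simp add: span_eq_iff)
  have Y_proj: "Y \<in> L \<and> (\<forall>Z\<in>L. (X - Y) \<bullet> Z = 0)"
    using Y unfolding span_L by (auto simp: orthogonal_def)
  have "proj L X = Y"
    unfolding proj_def tr_inner_eq_inner
    using Y_proj orthogonal_projection_unique[OF assms] by (intro the_equality) blast+
  with Y_proj show "proj L X \<in> L" "\<forall>Z\<in>L. (X - proj L X) \<bullet> Z = 0"
    by simp_all
qed

lemma proj_eqI: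
  assumes "subspace L" "Y \<in> L" "\<forall>Z\<in>L. (X - Y) \<bullet> Z = 0"
  shows "proj L X = Y"
  using orthogonal_projection_unique proj_characterization assms by blast

lemma proj_of_mem: "subspace L \<Longrightarrow> Y \<in> L \<Longrightarrow> proj L Y = Y"
  by (rule proj_eqI) auto

lemma jprod_symmetric:
  "transpose A = A \<Longrightarrow> transpose B = B \<Longrightarrow> jprod A B = (1/2) *\<^sub>R (A ** B + B ** A)"
  by (simp add: jprod_def)

lemma jprod_commuting:
  "transpose A = A \<Longrightarrow> transpose B = B \<Longrightarrow> A ** B = B ** A \<Longrightarrow> jprod A B = A ** B"
  by (simp add: jprod_symmetric scaleR_2[symmetric] del: scaleR_2)

lemma inner_jprod_swap:
  fixes A B C :: "real^'n^'n"
  assumes "transpose A = A" "transpose B = B" "transpose C = C"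
  shows "jprod A B \<bullet> C = B \<bullet> jprod A C"
proof -
  have "(A ** B) \<bullet> C = B \<bullet> (A ** C)" "(B ** A) \<bullet> C = B \<bullet> (C ** A)"
    using inner_matrix_mul_left[of A B C] inner_matrix_mul_right[of B A C] assms by simp_all
  then show ?thesis
    using assms by (simp add: jprod_symmetric inner_add_left inner_add_right)
qed

lemma jordan_subalgebra_subspace: "jordan_subalgebra L \<Longrightarrow> subspace L"
  and jordan_subalgebra_jprod: "jordan_subalgebra L \<Longrightarrow> A \<in> L \<Longrightarrow> B \<in> L \<Longrightarrow> jprod A B \<in> L"
  unfolding jordan_subalgebra_def by blast+

lemma jordan_subalgebra_symmetric: "jordan_subalgebra L \<Longrightarrow> A \<in> L \<Longrightarrow> transpose A = A"
  unfolding jordan_subalgebra_def Sym_def by blast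

lemma jordan_subalgebra_solve:
  fixes L :: "('n::finite) mat set"
  assumes L: "jordan_subalgebra L"
    and A: "A \<in> L" "invertible A" and B: "B \<in> L" "A ** B = B ** A"
  shows "\<exists>X\<in>L. A ** X = B"
proof -
  define V where "V = L \<inter> {X. A ** X = X ** A}"
  define f :: "'n mat \<Rightarrow> 'n mat" where "f X = A ** X" for X
  have "subspace V"
    unfolding V_def using jordan_subalgebra_subspace[OF L] subspace_commutant
    by (rule subspace_inter)
  have "linear f"
    unfolding f_def
    by (rule linearI) (simp_all add: matrix_add_ldistrib matrix_scalar_ac scalar_matrix_assoc)
  have "inj f"
    unfolding f_def using matrix_mul_left_cancel[OF A(2)] by (rule injI)
  have "f ` V \<subseteq> V"
  proof
    fix Y assume "Y \<in> f ` V"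
    then obtain X where X: "X \<in> L" "A ** X = X ** A" "Y = A ** X"
      unfolding V_def f_def by auto
    have "jprod A X = A ** X"
      using jordan_subalgebra_symmetric[OF L] A(1) X(1,2) by (intro jprod_commuting)
    then have "Y \<in> L"
      using jordan_subalgebra_jprod[OF L A(1) X(1)] X(3) by simp
    moreover have "A ** Y = Y ** A"
      using X(2,3) by (simp add: matrix_mul_assoc)
    ultimately show "Y \<in> V"
      unfolding V_def by simp
  qed
  moreover have "subspace (f ` V)"
    using \<open>linear f\<close> \<open>subspace V\<close> by (rule linear_subspace_image)
  moreover have "dim (f ` V) = dim V"
    using inj_on_subset[OF \<open>inj f\<close> subset_UNIV] by (rule dim_image_eq[OF \<open>linear f\<close>])
  ultimately have "f ` V = V"
    using subspace_dim_equal[OF _ \<open>subspace V\<close>] by simp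
  moreover have "B \<in> V"
    unfolding V_def using B by simp
  ultimately obtain X where "X \<in> V" "A ** X = B"
    unfolding f_def by (metis imageE)
  then show ?thesis
    unfolding V_def by blast
qed

lemma jordan_subalgebra_mat_1:
  assumes L: "jordan_subalgebra L"
  shows "mat 1 \<in> L"
proof -
  obtain K where K: "K \<in> L" "pos_def K"
    using L unfolding jordan_subalgebra_def Sym_plus_def by auto
  then have "invertible K"
    by (simp add: pos_def_invertible)
  then obtain X where "X \<in> L" "K ** X = K ** mat 1"
    using jordan_subalgebra_solve[OF L K(1) _ K(1)] by auto
  then show ?thesis
    using matrix_mul_left_cancel[OF \<open>invertible K\<close>] by metis
qed

lemma jordan_subalgebra_matrix_inv:
  assumes L: "jordan_subalgebra L" and A: "A \<in> L" "invertible A"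
  shows "matrix_inv A \<in> L"
  using jordan_subalgebra_solve[OF L A jordan_subalgebra_mat_1[OF L]] matrix_inv_unique[OF A(2)]
  by auto

lemma likelihood_equation_unique:
  assumes L: "jordan_subalgebra L" and K: "K \<in> L" "invertible K"
    and "proj L W = proj L (matrix_inv K)"
  shows "K = matrix_inv (proj L W)"
proof -
  have "proj L (matrix_inv K) = matrix_inv K"
    using L K by (simp add: jordan_subalgebra_matrix_inv jordan_subalgebra_subspace proj_of_mem)
  then show ?thesis
    using assms(4) matrix_inv_matrix_inv[OF K(2)] by simp
qed

lemma mle_solves_score_matching_equation:
  assumes L: "jordan_subalgebra L" and W: "transpose W = W"
    and P: "invertible (proj L W)"
  shows "proj L (jprod (matrix_inv (proj L W)) W) = mat 1"
proof -
  define M where "M = matrix_inv (proj L W)"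
  have "subspace L"
    using L by (rule jordan_subalgebra_subspace)
  note proj_W = proj_characterization[OF this, of W]
  note symmetric = jordan_subalgebra_symmetric[OF L]
  have "M \<in> L"
    unfolding M_def using L proj_W(1) P by (rule jordan_subalgebra_matrix_inv)
  have "jprod M (proj L W) = mat 1"
    using jprod_commuting[OF symmetric[OF \<open>M \<in> L\<close>] symmetric[OF proj_W(1)]]
    by (simp add: M_def P matrix_inv_left matrix_inv_right)
  have "(jprod M W - mat 1) \<bullet> Z = 0" if "Z \<in> L" for Z
  proof -
    have "jprod M Z \<in> L"
      using L \<open>M \<in> L\<close> that by (rule jordan_subalgebra_jprod)
    have "jprod M W \<bullet> Z = W \<bullet> jprod M Z"
      using symmetric \<open>M \<in> L\<close> W that by (simp add: inner_jprod_swap)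
    also have "\<dots> = proj L W \<bullet> jprod M Z"
      using proj_W(2) \<open>jprod M Z \<in> L\<close> by (simp add: inner_diff_left)
    also have "\<dots> = jprod M (proj L W) \<bullet> Z"
      using symmetric \<open>M \<in> L\<close> proj_W(1) that by (simp add: inner_jprod_swap)
    finally show ?thesis
      using \<open>jprod M (proj L W) = mat 1\<close> by (simp add: inner_diff_left)
  qed
  then show ?thesis
    unfolding M_def[symmetric]
    using \<open>subspace L\<close> jordan_subalgebra_mat_1[OF L] by (blast intro: proj_eqI)
qed

lemma sme_eqI: "sme_exists L W \<Longrightarrow> K \<in> L \<Longrightarrow> proj L (jprod K W) = mat 1 \<Longrightarrow> sme L W = K"
  unfolding sme_exists_def sme_def by (rule the1_equality) simp_all

lemma transpose_sample_cov: "transpose (sample_cov n x) = sample_cov n x"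
  by (simp add: sample_cov_def transpose_def vec_eq_iff sum_component mult.commute)

theorem theorem1:
  fixes L :: "('p::finite) mat set" and n :: nat and x :: "nat \<Rightarrow> real^'p"
  assumes "jordan_subalgebra L"
    and "n \<ge> 1"
  defines "W \<equiv> sample_cov n x"
  shows "mat 1 \<in> L \<and>
    (invertible (proj L W) \<longrightarrow>
      (let M = matrix_inv (proj L W) in
         M \<in> L
       \<and> invertible M \<and> proj L W = proj L (matrix_inv M)
       \<and> (\<forall>K\<in>L. invertible K \<and> proj L W = proj L (matrix_inv K) \<longrightarrow> K = M)
       \<and> proj L (jprod M W) = mat 1
       \<and> (sme_exists L W \<longrightarrow> sme L W = M)))"
proof -
  note L = assms(1)
  have "subspace L" "proj L W \<in> L"
    using jordan_subalgebra_subspace[OF L] proj_characterization by blast+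
  moreover have "matrix_inv (proj L W) \<in> L" if "invertible (proj L W)"
    using L \<open>proj L W \<in> L\<close> that by (rule jordan_subalgebra_matrix_inv)
  moreover have "proj L (jprod (matrix_inv (proj L W)) W) = mat 1" if "invertible (proj L W)"
    using L that unfolding W_def by (simp add: transpose_sample_cov mle_solves_score_matching_equation)
  ultimately show ?thesis
    using L by (auto simp: Let_def jordan_subalgebra_mat_1 invertible_matrix_inv
        matrix_inv_matrix_inv proj_of_mem sme_eqI likelihood_equation_unique)
qed

end
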